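(* For every graph $G$, $\pi_{T_w}(G)\le \min\{\pi(G),\pi'(G)\}+1$.
   Context: Graphs are finite and simple. A sequence is nonrepetitive if no block of consecutive terms has the form $r_1\dots r_nr_1\dots r_n$ with $n\ge1$. A vertex-colouring of $G$ is nonrepetitive if for every path $v_1,\dots,v_k$ of $G$ the colour sequence of its vertices is nonrepetitive; $\pi(G)$ (Thue chromatic number) is the minimum number of colours in such a colouring. Analogously an edge-colouring is nonrepetitive if the colour sequence of the edges of every path is nonrepetitive, and $\pi'(G)$ (Thue chromatic index) is the minimum number of colours in such a colouring. A weak total Thue colouring of $G$ is a colouring of $V(G)\cup E(G)$ such that for every path $v_1,e_1,v_2,\dots,e_{k-1},v_k$ in $G$ the sequence of colours of $v_1,e_1,v_2,e_2,\dots,v_k$ is nonrepetitive; $\pi_{T_w}(G)$ (weak total Thue chromatic number) is the minimum number of colours in such a colouring. *)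

theory Defs
  imports Main
begin

definition simple_graph :: "'a set \<Rightarrow> 'a set set \<Rightarrow> bool" where
  "simple_graph V E \<longleftrightarrow> finite V \<and> (\<forall>e\<in>E. \<exists>u v. e = {u, v} \<and> u \<noteq> v \<and> u \<in> V \<and> v \<in> V)"

definition nonrepetitive :: "'c list \<Rightarrow> bool" where
  "nonrepetitive s \<longleftrightarrow> \<not> (\<exists>xs ys zs. ys \<noteq> [] \<and> s = xs @ ys @ ys @ zs)"

definition is_path :: "'a set \<Rightarrow> 'a set set \<Rightarrow> 'a list \<Rightarrow> bool" where
  "is_path V E vs \<longleftrightarrow> vs \<noteq> [] \<and> distinct vs \<and> set vs \<subseteq> V \<and>
     (\<forall>i. Suc i < length vs \<longrightarrow> {vs ! i, vs ! Suc i} \<in> E)"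

fun path_edges :: "'a list \<Rightarrow> 'a set list" where
  "path_edges (u # v # vs) = {u, v} # path_edges (v # vs)"
| "path_edges _ = []"

fun total_seq :: "('a \<Rightarrow> 'c) \<Rightarrow> ('a set \<Rightarrow> 'c) \<Rightarrow> 'a list \<Rightarrow> 'c list" where
  "total_seq c d [] = []"
| "total_seq c d [v] = [c v]"
| "total_seq c d (u # v # vs) = c u # d {u, v} # total_seq c d (v # vs)"

definition nonrep_vertex_colouring :: "'a set \<Rightarrow> 'a set set \<Rightarrow> ('a \<Rightarrow> 'c) \<Rightarrow> bool" where
  "nonrep_vertex_colouring V E c \<longleftrightarrow> (\<forall>vs. is_path V E vs \<longrightarrow> nonrepetitive (map c vs))"

definition nonrep_edge_colouring :: "'a set \<Rightarrow> 'a set set \<Rightarrow> ('a set \<Rightarrow> 'c) \<Rightarrow> bool" where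
  "nonrep_edge_colouring V E d \<longleftrightarrow> (\<forall>vs. is_path V E vs \<longrightarrow> nonrepetitive (map d (path_edges vs)))"

definition weak_total_thue_colouring :: "'a set \<Rightarrow> 'a set set \<Rightarrow> ('a \<Rightarrow> 'c) \<Rightarrow> ('a set \<Rightarrow> 'c) \<Rightarrow> bool" where
  "weak_total_thue_colouring V E c d \<longleftrightarrow> (\<forall>vs. is_path V E vs \<longrightarrow> nonrepetitive (total_seq c d vs))"

definition thue_number :: "'a set \<Rightarrow> 'a set set \<Rightarrow> nat" where
  "thue_number V E = (LEAST k. \<exists>c :: 'a \<Rightarrow> nat. (\<forall>v\<in>V. c v < k) \<and> nonrep_vertex_colouring V E c)"

definition thue_index :: "'a set \<Rightarrow> 'a set set \<Rightarrow> nat" where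
  "thue_index V E = (LEAST k. \<exists>d :: 'a set \<Rightarrow> nat. (\<forall>e\<in>E. d e < k) \<and> nonrep_edge_colouring V E d)"

definition weak_total_thue_number :: "'a set \<Rightarrow> 'a set set \<Rightarrow> nat" where
  "weak_total_thue_number V E = (LEAST k. \<exists>(c :: 'a \<Rightarrow> nat) (d :: 'a set \<Rightarrow> nat).
      (\<forall>v\<in>V. c v < k) \<and> (\<forall>e\<in>E. d e < k) \<and> weak_total_thue_colouring V E c d)"

end

theory Submission
  imports Defs
begin

text \<open>Colour all edges (or all vertices) with one fresh colour k and keep a nonrepetitive
  vertex (or edge) colouring on the rest. Along a path the fresh colour then occupies every
  second position. A square w w in the total sequence cannot consist of k's alone, since no
  two consecutive entries are k; so deleting the k's turns it into a square in the vertex (or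
  edge) sequence of the same path.\<close>

lemma nonrepetitive_if_distinct: "distinct s \<Longrightarrow> nonrepetitive s"
  unfolding nonrepetitive_def by auto

lemma nonrepetitive_if_filter_nonrepetitive:
  assumes "nonrepetitive (filter (\<lambda>x. x \<noteq> k) s)"
    and "\<nexists>as bs. s = as @ k # k # bs"
  shows "nonrepetitive s"
  unfolding nonrepetitive_def
proof
  assume "\<exists>xs ys zs. ys \<noteq> [] \<and> s = xs @ ys @ ys @ zs"
  then obtain xs ys zs where ys: "ys \<noteq> []" and s: "s = xs @ ys @ ys @ zs" by blast
  let ?P = "\<lambda>x. x \<noteq> k"
  show False
  proof (cases "filter ?P ys = []")
    case True
    with ys have "ys = replicate (Suc (length ys - 1)) k"
      by (auto simp: filter_empty_conv intro: replicate_eqI)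
    then have "ys @ ys = k # k # replicate (length ys - 1) k @ replicate (length ys - 1) k"
      by (metis replicate_Suc replicate_app_Cons_same append_Cons)
    then show False using assms(2) s by (metis append.assoc append_Cons)
  next
    case False
    have "filter ?P s = filter ?P xs @ filter ?P ys @ filter ?P ys @ filter ?P zs"
      using s by simp
    with False assms(1) show False unfolding nonrepetitive_def by blast
  qed
qed

lemma total_seq_no_double_vertex_colour:
  "k \<notin> c ` set vs \<Longrightarrow> \<nexists>as bs. total_seq c d vs = as @ k # k # bs"
proof (induction c d vs rule: total_seq.induct)
  case (3 c d u v vs)
  then show ?case by (cases vs) (auto simp: Cons_eq_append_conv)
qed (auto simp: Cons_eq_append_conv)

lemma total_seq_no_double_edge_colour:
  "k \<notin> d ` set (path_edges vs) \<Longrightarrow> \<nexists>as bs. total_seq c d vs = as @ k # k # bs"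
proof (induction c d vs rule: total_seq.induct)
  case (3 c d u v vs)
  then show ?case by (cases vs) (auto simp: Cons_eq_append_conv)
qed (auto simp: Cons_eq_append_conv)

lemma filter_total_seq_const_edges:
  fixes c :: "'a \<Rightarrow> 'c"
  shows "k \<notin> c ` set vs \<Longrightarrow> filter (\<lambda>x. x \<noteq> k) (total_seq c (\<lambda>_. k) vs) = map c vs"
  by (induction c "\<lambda>_ :: 'a set. k" vs rule: total_seq.induct) auto

lemma filter_total_seq_const_vertices:
  fixes d :: "'a set \<Rightarrow> 'c"
  shows "k \<notin> d ` set (path_edges vs) \<Longrightarrow>
    filter (\<lambda>x. x \<noteq> k) (total_seq (\<lambda>_. k) d vs) = map d (path_edges vs)"
  by (induction "\<lambda>_ :: 'a. k" d vs rule: total_seq.induct) auto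

lemma set_path_edges_subset:
  "(\<forall>i. Suc i < length vs \<longrightarrow> {vs ! i, vs ! Suc i} \<in> E) \<Longrightarrow> set (path_edges vs) \<subseteq> E"
proof (induction vs rule: path_edges.induct)
  case (1 u v vs)
  have "{u, v} \<in> E" using "1.prems" by auto
  moreover have "set (path_edges (v # vs)) \<subseteq> E"
  proof (rule "1.IH", intro allI impI)
    fix i assume "Suc i < length (v # vs)"
    then show "{(v # vs) ! i, (v # vs) ! Suc i} \<in> E" using "1.prems" by fastforce
  qed
  ultimately show ?case by simp
qed auto

lemma path_edges_subset_set: "e \<in> set (path_edges vs) \<Longrightarrow> e \<subseteq> set vs"
  by (induction vs rule: path_edges.induct) auto

lemma distinct_path_edges: "distinct vs \<Longrightarrow> distinct (path_edges vs)"
  by (induction vs rule: path_edges.induct) (auto dest: path_edges_subset_set)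

lemma is_path_edges_subset: "is_path V E vs \<Longrightarrow> set (path_edges vs) \<subseteq> E"
  unfolding is_path_def using set_path_edges_subset by blast

lemma weak_total_thue_colouring_fresh_edge_colour:
  assumes "nonrep_vertex_colouring V E c" and "k \<notin> c ` V"
  shows "weak_total_thue_colouring V E c (\<lambda>_. k)"
  unfolding weak_total_thue_colouring_def
proof (intro allI impI)
  fix vs assume path: "is_path V E vs"
  with assms(2) have fresh: "k \<notin> c ` set vs" unfolding is_path_def by blast
  from path assms(1) have "nonrepetitive (map c vs)"
    unfolding nonrep_vertex_colouring_def by blast
  then have "nonrepetitive (filter (\<lambda>x. x \<noteq> k) (total_seq c (\<lambda>_. k) vs))"
    by (simp add: filter_total_seq_const_edges[OF fresh])
  then show "nonrepetitive (total_seq c (\<lambda>_. k) vs)"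
    using total_seq_no_double_vertex_colour[OF fresh] by (rule nonrepetitive_if_filter_nonrepetitive)
qed

lemma weak_total_thue_colouring_fresh_vertex_colour:
  assumes "nonrep_edge_colouring V E d" and "k \<notin> d ` E"
  shows "weak_total_thue_colouring V E (\<lambda>_. k) d"
  unfolding weak_total_thue_colouring_def
proof (intro allI impI)
  fix vs assume path: "is_path V E vs"
  from assms(2) have fresh: "k \<notin> d ` set (path_edges vs)"
    using is_path_edges_subset[OF path] by blast
  from path assms(1) have "nonrepetitive (map d (path_edges vs))"
    unfolding nonrep_edge_colouring_def by blast
  then have "nonrepetitive (filter (\<lambda>x. x \<noteq> k) (total_seq (\<lambda>_. k) d vs))"
    by (simp add: filter_total_seq_const_vertices[OF fresh])
  then show "nonrepetitive (total_seq (\<lambda>_. k) d vs)"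
    using total_seq_no_double_edge_colour[OF fresh] by (rule nonrepetitive_if_filter_nonrepetitive)
qed

lemma weak_total_thue_number_le_vertex_colouring:
  fixes c :: "'a \<Rightarrow> nat"
  assumes "\<forall>v\<in>V. c v < k" and "nonrep_vertex_colouring V E c"
  shows "weak_total_thue_number V E \<le> Suc k"
proof -
  from assms(1) have "k \<notin> c ` V" by auto
  with assms(2) have "weak_total_thue_colouring V E c (\<lambda>_. k)"
    by (rule weak_total_thue_colouring_fresh_edge_colour)
  with assms(1) show ?thesis
    unfolding weak_total_thue_number_def
    by - (rule Least_le, intro exI[of _ c] exI[of _ "\<lambda>_. k"], auto)
qed

lemma weak_total_thue_number_le_edge_colouring:
  fixes d :: "'a set \<Rightarrow> nat"
  assumes "\<forall>e\<in>E. d e < k" and "nonrep_edge_colouring V E d"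
  shows "weak_total_thue_number V E \<le> Suc k"
proof -
  from assms(1) have "k \<notin> d ` E" by auto
  with assms(2) have "weak_total_thue_colouring V E (\<lambda>_. k) d"
    by (rule weak_total_thue_colouring_fresh_vertex_colour)
  with assms(1) show ?thesis
    unfolding weak_total_thue_number_def
    by - (rule Least_le, intro exI[of _ "\<lambda>_. k"] exI[of _ d], auto)
qed

lemma ex_inj_on_less_card:
  assumes "finite A"
  obtains h :: "'b \<Rightarrow> nat" where "inj_on h A" and "\<forall>x\<in>A. h x < card A"
proof -
  from ex_bij_betw_finite_nat[OF assms] obtain h :: "'b \<Rightarrow> nat"
    where "bij_betw h A {0..<card A}" by blast
  then show thesis by (intro that) (auto simp: bij_betw_def)
qed

lemma ex_nonrep_vertex_colouring:
  assumes "finite V"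
  shows "\<exists>k (c :: 'a \<Rightarrow> nat). (\<forall>v\<in>V. c v < k) \<and> nonrep_vertex_colouring V E c"
proof -
  obtain h :: "'a \<Rightarrow> nat" where h: "inj_on h V" "\<forall>v\<in>V. h v < card V"
    by (rule ex_inj_on_less_card[OF assms])
  have "nonrep_vertex_colouring V E h"
    unfolding nonrep_vertex_colouring_def is_path_def
    using h(1) by (auto intro!: nonrepetitive_if_distinct simp: distinct_map intro: inj_on_subset)
  with h(2) show ?thesis by blast
qed

lemma ex_nonrep_edge_colouring:
  assumes "simple_graph V E"
  shows "\<exists>k (d :: 'a set \<Rightarrow> nat). (\<forall>e\<in>E. d e < k) \<and> nonrep_edge_colouring V E d"
proof -
  from assms have "E \<subseteq> Pow V" and "finite V" unfolding simple_graph_def by auto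
  then have "finite E" by (meson finite_Pow_iff finite_subset)
  then obtain h :: "'a set \<Rightarrow> nat" where h: "inj_on h E" "\<forall>e\<in>E. h e < card E"
    by (rule ex_inj_on_less_card)
  have "nonrepetitive (map h (path_edges vs))" if "is_path V E vs" for vs
  proof (rule nonrepetitive_if_distinct)
    from that have "distinct (path_edges vs)"
      unfolding is_path_def by (simp add: distinct_path_edges)
    with h(1) is_path_edges_subset[OF that] show "distinct (map h (path_edges vs))"
      by (simp add: distinct_map inj_on_subset)
  qed
  with h(2) show ?thesis unfolding nonrep_edge_colouring_def by blast
qed

theorem mainTheorem2:
  fixes V :: "'a set" and E :: "'a set set"
  assumes "simple_graph V E"
  shows "weak_total_thue_number V E \<le> min (thue_number V E) (thue_index V E) + 1"
proof -
  from assms have "finite V" unfolding simple_graph_def by simp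
  obtain c :: "'a \<Rightarrow> nat" where "\<forall>v\<in>V. c v < thue_number V E" "nonrep_vertex_colouring V E c"
    using LeastI_ex[OF ex_nonrep_vertex_colouring[OF \<open>finite V\<close>, of E]]
    unfolding thue_number_def by blast
  then have "weak_total_thue_number V E \<le> thue_number V E + 1"
    using weak_total_thue_number_le_vertex_colouring by simp
  moreover obtain d :: "'a set \<Rightarrow> nat" where
    "\<forall>e\<in>E. d e < thue_index V E" "nonrep_edge_colouring V E d"
    using LeastI_ex[OF ex_nonrep_edge_colouring[OF assms]] unfolding thue_index_def by blast
  then have "weak_total_thue_number V E \<le> thue_index V E + 1"
    using weak_total_thue_number_le_edge_colouring by simp
  ultimately show ?thesis by simp
qed

end
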